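(* Let $D,\Omega$ be planar domains with $0\notin D$, $\wp$ a smooth positive function on $\Omega$, and let $f:D\to\Omega$ be a diffeomorphism such that $$\wp^2(f(z))\,f_z\,\overline{f_{\bar z}}=\frac{\mathbf{c}}{z^2},\qquad z\in D,$$ for a real constant $\mathbf{c}$. Assume that for $w\in\Omega$ the following function is well defined: $$\omega(w)=\begin{cases}2\sqrt{-\mathbf{c}}\,\log\dfrac{1}{|f^{-1}(w)|},&\mathbf{c}<0,\\[4pt] 2\sqrt{\mathbf{c}}\,\arg(f^{-1}(w)),&\mathbf{c}>0.\end{cases}$$ Then $\omega$ satisfies $$\mathrm{div}\left(\frac{\nabla\omega}{\sqrt{1+\frac{|\nabla\omega(u,v)|^2}{\wp^2(u,v)}}}\right)=0\quad\text{in }\Omega.$$ *)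

theory Defs
  imports "HOL-Analysis.Analysis"
begin

text \<open>C^k functions on a set (derivative taken at each point of the set, meant for open sets).\<close>
primrec Ck_on :: "nat \<Rightarrow> 'a::euclidean_space set \<Rightarrow> ('a \<Rightarrow> 'b::real_normed_vector) \<Rightarrow> bool" where
  "Ck_on 0 S f = continuous_on S f"
| "Ck_on (Suc k) S f =
     (\<exists>f'. (\<forall>x\<in>S. (f has_derivative f' x) (at x)) \<and> (\<forall>v. Ck_on k S (\<lambda>x. f' x v)))"

definition smooth_on :: "'a::euclidean_space set \<Rightarrow> ('a \<Rightarrow> 'b::real_normed_vector) \<Rightarrow> bool" where
  "smooth_on S f \<longleftrightarrow> (\<forall>k. Ck_on k S f)"

definition wirt_z :: "(complex \<Rightarrow> complex) \<Rightarrow> complex \<Rightarrow> complex" where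
  "wirt_z f z = (frechet_derivative f (at z) 1 - \<i> * frechet_derivative f (at z) \<i>) / 2"

definition wirt_zbar :: "(complex \<Rightarrow> complex) \<Rightarrow> complex \<Rightarrow> complex" where
  "wirt_zbar f z = (frechet_derivative f (at z) 1 + \<i> * frechet_derivative f (at z) \<i>) / 2"

text \<open>Gradient of a real function of w = u + i v, written as the complex number omega_u + i omega_v.\<close>
definition grad :: "(complex \<Rightarrow> real) \<Rightarrow> complex \<Rightarrow> complex" where
  "grad g w = complex_of_real (frechet_derivative g (at w) 1)
              + \<i> * complex_of_real (frechet_derivative g (at w) \<i>)"

text \<open>Divergence of a planar vector field V = P + i Q: P_u + Q_v.\<close>
definition divergence :: "(complex \<Rightarrow> complex) \<Rightarrow> complex \<Rightarrow> real" where
  "divergence V w = Re (frechet_derivative V (at w) 1) + Im (frechet_derivative V (at w) \<i>)"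

end

theory Submission
  imports Defs
begin

(* Write g for the inverse of f and choose beta with beta^2 = -4c (beta = -2 sqrt(-c) if c < 0,
   beta = -2i sqrt c if c > 0), so that omega = Re F + const locally, with F = beta log g.
   The chain rule for g = f^-1 expresses the Wirtinger derivatives P = F_w and Q = F_wbar
   through f_z and f_zbar, and grad omega = Q + conj P. The equation for f makes P Q a
   nonnegative real number with (|P|^2 - |Q|^2)^2 = 4 |P| |Q| p^2, and then
     grad omega / sqrt (1 + |grad omega|^2 / p^2) = +-(conj P - Q),
   the rotated gradient (d/dv Im F, - d/du Im F), the sign being that of the Jacobian of g,
   which is constant on the connected set Omega. A rotated gradient is divergence free by the
   symmetry of the mixed second derivatives (Schwarz), proved here from the mean value theorem. *)

lemma has_real_derivative_along_line:
  fixes \<phi> :: "'a::real_normed_vector \<Rightarrow> real"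
  assumes "(\<phi> has_derivative D) (at (a + s *\<^sub>R v))"
  shows "((\<lambda>s. \<phi> (a + s *\<^sub>R v)) has_real_derivative D v) (at s)"
proof -
  have "((\<lambda>s. a + s *\<^sub>R v) has_derivative (\<lambda>s. s *\<^sub>R v)) (at s)"
    by (auto intro!: derivative_eq_intros)
  from diff_chain_at[OF this assms]
  have "((\<lambda>s. \<phi> (a + s *\<^sub>R v)) has_derivative (\<lambda>s. D (s *\<^sub>R v))) (at s)"
    by (simp add: o_def)
  moreover have "D (x *\<^sub>R v) = D v * x" for x
    using linear_scale[OF has_derivative_linear[OF assms]] by simp
  ultimately show ?thesis
    unfolding has_field_derivative_def by (simp add: mult.commute[of _ "D v"] fun_eq_iff)
qed

lemma second_difference_mean_value:
  fixes \<phi> :: "'a::real_normed_vector \<Rightarrow> real"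
  assumes h: "h > 0"
    and square: "\<And>s t. 0 \<le> s \<Longrightarrow> s \<le> h \<Longrightarrow> 0 \<le> t \<Longrightarrow> t \<le> h \<Longrightarrow> x0 + s *\<^sub>R u + t *\<^sub>R v \<in> S"
    and \<phi>: "\<And>x. x \<in> S \<Longrightarrow> (\<phi> has_derivative D\<phi> x) (at x)"
    and \<phi>u: "\<And>x. x \<in> S \<Longrightarrow> ((\<lambda>y. D\<phi> y u) has_derivative E x) (at x)"
  obtains s t where "0 < s" "s < h" "0 < t" "t < h"
    "\<phi> (x0 + h *\<^sub>R u + h *\<^sub>R v) - \<phi> (x0 + h *\<^sub>R u) - \<phi> (x0 + h *\<^sub>R v) + \<phi> x0
       = h\<^sup>2 * E (x0 + s *\<^sub>R u + t *\<^sub>R v) v"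
proof -
  define pt where "pt s t = x0 + s *\<^sub>R u + t *\<^sub>R v" for s t
  have inS: "pt s t \<in> S" if "0 \<le> s" "s \<le> h" "0 \<le> t" "t \<le> h" for s t
    using square[OF that] by (simp add: pt_def)
  have along_u: "((\<lambda>s. \<phi> (pt s t)) has_real_derivative D\<phi> (pt s t) u) (at s)" if "pt s t \<in> S" for s t
    using has_real_derivative_along_line[of \<phi> "D\<phi> (pt s t)" "x0 + t *\<^sub>R v" s u] \<phi>[OF that]
    by (simp add: pt_def algebra_simps)
  have along_v: "((\<lambda>t. D\<phi> (pt s t) u) has_real_derivative E (pt s t) v) (at t)" if "pt s t \<in> S" for s t
    using has_real_derivative_along_line[of "\<lambda>y. D\<phi> y u" "E (pt s t)" "x0 + s *\<^sub>R u" t v] \<phi>u[OF that]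
    by (simp add: pt_def algebra_simps)
  have "\<exists>s. 0 < s \<and> s < h \<and> (\<phi> (pt h h) - \<phi> (pt h 0)) - (\<phi> (pt 0 h) - \<phi> (pt 0 0))
      = (h - 0) * (D\<phi> (pt s h) u - D\<phi> (pt s 0) u)"
  proof (rule MVT2[OF h])
    fix s assume "0 \<le> s" "s \<le> h"
    with h show "((\<lambda>s. \<phi> (pt s h) - \<phi> (pt s 0)) has_real_derivative D\<phi> (pt s h) u - D\<phi> (pt s 0) u) (at s)"
      by (intro DERIV_diff along_u inS) auto
  qed
  then obtain s where s: "0 < s" "s < h"
    and \<Delta>s: "\<phi> (pt h h) - \<phi> (pt h 0) - \<phi> (pt 0 h) + \<phi> (pt 0 0) = h * (D\<phi> (pt s h) u - D\<phi> (pt s 0) u)"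
    by (auto simp: algebra_simps)
  have "\<exists>t. 0 < t \<and> t < h \<and> D\<phi> (pt s h) u - D\<phi> (pt s 0) u = (h - 0) * E (pt s t) v"
  proof (rule MVT2[OF h])
    fix t assume "0 \<le> t" "t \<le> h"
    with s show "((\<lambda>t. D\<phi> (pt s t) u) has_real_derivative E (pt s t) v) (at t)"
      by (intro along_v inS) auto
  qed
  then obtain t where "0 < t" "t < h" "D\<phi> (pt s h) u - D\<phi> (pt s 0) u = h * E (pt s t) v"
    by auto
  with s \<Delta>s show ?thesis
    by (intro that[of s t]) (simp_all add: pt_def power2_eq_square)
qed

lemma mixed_partials_agree_near:
  fixes \<phi> :: "'a::real_normed_vector \<Rightarrow> real"
  assumes r: "r > 0" "ball x0 r \<subseteq> S"
    and \<phi>: "\<And>x. x \<in> S \<Longrightarrow> (\<phi> has_derivative D\<phi> x) (at x)"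
    and \<phi>u: "\<And>x. x \<in> S \<Longrightarrow> ((\<lambda>y. D\<phi> y u) has_derivative Eu x) (at x)"
    and \<phi>v: "\<And>x. x \<in> S \<Longrightarrow> ((\<lambda>y. D\<phi> y v) has_derivative Ev x) (at x)"
  obtains y y' where "y \<in> ball x0 r" "y' \<in> ball x0 r" "Eu y v = Ev y' u"
proof -
  define h where "h = r / (norm u + norm v + 1)"
  have "norm u + norm v + 1 > 0"
    by (simp add: add_nonneg_pos)
  with r have h: "h > 0" "h * (norm u + norm v) < r"
    by (simp_all add: h_def field_simps)
  have near: "x0 + s *\<^sub>R u + t *\<^sub>R v \<in> ball x0 r" "x0 + t *\<^sub>R v + s *\<^sub>R u \<in> ball x0 r"
    if "0 \<le> s" "s \<le> h" "0 \<le> t" "t \<le> h" for s t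
  proof -
    have "norm (s *\<^sub>R u + t *\<^sub>R v) \<le> s * norm u + t * norm v"
      using norm_triangle_ineq[of "s *\<^sub>R u" "t *\<^sub>R v"] that by simp
    also have "\<dots> \<le> h * (norm u + norm v)"
      using that by (simp add: distrib_left add_mono mult_right_mono)
    moreover have "dist x0 (x0 + s *\<^sub>R u + t *\<^sub>R v) = norm (s *\<^sub>R u + t *\<^sub>R v)"
      by (simp add: dist_norm norm_minus_commute add_ac)
    ultimately show "x0 + s *\<^sub>R u + t *\<^sub>R v \<in> ball x0 r" "x0 + t *\<^sub>R v + s *\<^sub>R u \<in> ball x0 r"
      using h(2) by (simp_all add: add_ac)
  qed
  obtain s t where "0 < s" "s < h" "0 < t" "t < h"
    and \<Delta>u: "\<phi> (x0 + h *\<^sub>R u + h *\<^sub>R v) - \<phi> (x0 + h *\<^sub>R u) - \<phi> (x0 + h *\<^sub>R v) + \<phi> x0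
               = h\<^sup>2 * Eu (x0 + s *\<^sub>R u + t *\<^sub>R v) v"
    using second_difference_mean_value[OF h(1) _ \<phi> \<phi>u] near(1) r(2) by blast
  moreover obtain s' t' where "0 < s'" "s' < h" "0 < t'" "t' < h"
    and \<Delta>v: "\<phi> (x0 + h *\<^sub>R v + h *\<^sub>R u) - \<phi> (x0 + h *\<^sub>R v) - \<phi> (x0 + h *\<^sub>R u) + \<phi> x0
               = h\<^sup>2 * Ev (x0 + s' *\<^sub>R v + t' *\<^sub>R u) u"
    using second_difference_mean_value[OF h(1) _ \<phi> \<phi>v] near(2) r(2) by blast
  moreover have "h\<^sup>2 * Eu (x0 + s *\<^sub>R u + t *\<^sub>R v) v = h\<^sup>2 * Ev (x0 + s' *\<^sub>R v + t' *\<^sub>R u) u"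
    unfolding \<Delta>u[symmetric] \<Delta>v[symmetric] by (simp add: algebra_simps)
  ultimately show thesis
    using that near(1)[of s t] near(2)[of t' s'] h(1) by (simp add: add_ac)
qed

lemma mixed_partials_symmetric:
  fixes \<phi> :: "'a::real_normed_vector \<Rightarrow> real"
  assumes S: "open S" "x0 \<in> S"
    and \<phi>: "\<And>x. x \<in> S \<Longrightarrow> (\<phi> has_derivative D\<phi> x) (at x)"
    and \<phi>u: "\<And>x. x \<in> S \<Longrightarrow> ((\<lambda>y. D\<phi> y u) has_derivative Eu x) (at x)"
    and \<phi>v: "\<And>x. x \<in> S \<Longrightarrow> ((\<lambda>y. D\<phi> y v) has_derivative Ev x) (at x)"
    and cont: "isCont (\<lambda>x. Eu x v) x0" "isCont (\<lambda>x. Ev x u) x0"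
  shows "Eu x0 v = Ev x0 u"
proof -
  have "\<bar>Eu x0 v - Ev x0 u\<bar> < 2 * e" if e: "e > 0" for e
  proof -
    obtain r0 where r0: "r0 > 0" "ball x0 r0 \<subseteq> S"
      using S openE by blast
    obtain ru where ru: "ru > 0" "\<And>y. dist y x0 < ru \<Longrightarrow> \<bar>Eu y v - Eu x0 v\<bar> < e"
      using cont(1) e unfolding continuous_at_eps_delta dist_real_def by blast
    obtain rv where rv: "rv > 0" "\<And>y. dist y x0 < rv \<Longrightarrow> \<bar>Ev y u - Ev x0 u\<bar> < e"
      using cont(2) e unfolding continuous_at_eps_delta dist_real_def by blast
    have "min r0 (min ru rv) > 0" "ball x0 (min r0 (min ru rv)) \<subseteq> S"
      using r0 ru rv by auto
    then obtain y y' where "y \<in> ball x0 (min r0 (min ru rv))" "y' \<in> ball x0 (min r0 (min ru rv))"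
      and "Eu y v = Ev y' u"
      by (rule mixed_partials_agree_near[OF _ _ \<phi> \<phi>u \<phi>v])
    with ru(2)[of y] rv(2)[of y'] show ?thesis
      by (simp add: dist_commute)
  qed
  from this[of "\<bar>Eu x0 v - Ev x0 u\<bar> / 2"] show ?thesis
    by fastforce
qed

lemma mixed_partials_symmetric_complex:
  fixes g :: "'a::real_normed_vector \<Rightarrow> complex"
  assumes S: "open S" "x0 \<in> S"
    and g: "\<And>x. x \<in> S \<Longrightarrow> (g has_derivative Dg x) (at x)"
    and gu: "\<And>x. x \<in> S \<Longrightarrow> ((\<lambda>y. Dg y u) has_derivative Eu x) (at x)"
    and gv: "\<And>x. x \<in> S \<Longrightarrow> ((\<lambda>y. Dg y v) has_derivative Ev x) (at x)"
    and cont: "isCont (\<lambda>x. Eu x v) x0" "isCont (\<lambda>x. Ev x u) x0"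
  shows "Eu x0 v = Ev x0 u"
proof (rule complex_eqI)
  show "Re (Eu x0 v) = Re (Ev x0 u)"
    by (rule mixed_partials_symmetric[of S x0 "\<lambda>x. Re (g x)" "\<lambda>x h. Re (Dg x h)" u
          "\<lambda>x h. Re (Eu x h)" v "\<lambda>x h. Re (Ev x h)"])
      (use S g gu gv cont in \<open>auto intro: has_derivative_Re continuous_intros\<close>)
  show "Im (Eu x0 v) = Im (Ev x0 u)"
    by (rule mixed_partials_symmetric[of S x0 "\<lambda>x. Im (g x)" "\<lambda>x h. Im (Dg x h)" u
          "\<lambda>x h. Im (Eu x h)" v "\<lambda>x h. Im (Ev x h)"])
      (use S g gu gv cont in \<open>auto intro: has_derivative_Im continuous_intros\<close>)
qed

lemma smooth_on_second_derivatives: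
  assumes "smooth_on S g"
  obtains g' G where "\<And>x. x \<in> S \<Longrightarrow> (g has_derivative g' x) (at x)"
    and "\<And>v x. x \<in> S \<Longrightarrow> ((\<lambda>y. g' y v) has_derivative G v x) (at x)"
    and "\<And>v u. continuous_on S (\<lambda>x. G v x u)"
    and "\<And>v. continuous_on S (\<lambda>x. g' x v)"
proof -
  from assms have "Ck_on (Suc (Suc 0)) S g"
    unfolding smooth_on_def by blast
  then obtain g' where g': "\<forall>x\<in>S. (g has_derivative g' x) (at x)"
    and "\<forall>v. \<exists>Gv. (\<forall>x\<in>S. ((\<lambda>y. g' y v) has_derivative Gv x) (at x)) \<and> (\<forall>u. continuous_on S (\<lambda>x. Gv x u))"
    by auto
  then obtain G where G: "\<forall>v. (\<forall>x\<in>S. ((\<lambda>y. g' y v) has_derivative G v x) (at x)) \<and> (\<forall>u. continuous_on S (\<lambda>x. G v x u))"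
    by metis
  have "continuous_on S (\<lambda>x. g' x v)" for v
    using G by (intro has_derivative_continuous_on) (blast intro: has_derivative_at_withinI)
  with g' G show thesis
    by (intro that) auto
qed

lemma derivative_right_inverse:
  assumes "open S" "w \<in> S" and fg: "\<And>x. x \<in> S \<Longrightarrow> f (g x) = x"
    and g: "(g has_derivative g') (at w)" and f: "(f has_derivative f') (at (g w))"
  shows "f' (g' h) = h"
proof -
  have "((\<lambda>x. f (g x)) has_derivative (\<lambda>h. f' (g' h))) (at w)"
    using diff_chain_at[OF g f] by (simp add: o_def)
  then have "((\<lambda>x. x) has_derivative (\<lambda>h. f' (g' h))) (at w)"
    by (rule has_derivative_transform_within_open[OF _ assms(1,2)]) (simp add: fg)
  then have "(\<lambda>h. f' (g' h)) = (\<lambda>h. h)"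
    using has_derivative_ident has_derivative_unique by blast
  then show ?thesis by metis
qed

lemma smooth_inverse_derivatives:
  assumes bij: "bij_betw f D \<Omega>" and "open \<Omega>"
    and "smooth_on D f" "smooth_on \<Omega> (inv_into D f)"
  obtains f' g' G where "\<And>z. z \<in> D \<Longrightarrow> (f has_derivative f' z) (at z)"
    and "\<And>w. w \<in> \<Omega> \<Longrightarrow> (inv_into D f has_derivative g' w) (at w)"
    and "\<And>v w. w \<in> \<Omega> \<Longrightarrow> ((\<lambda>y. g' y v) has_derivative G v w) (at w)"
    and "\<And>v u. continuous_on \<Omega> (\<lambda>w. G v w u)"
    and "\<And>v. continuous_on \<Omega> (\<lambda>w. g' w v)"
    and "\<And>w h. w \<in> \<Omega> \<Longrightarrow> f' (inv_into D f w) (g' w h) = h"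
proof -
  obtain f' where f': "\<And>z. z \<in> D \<Longrightarrow> (f has_derivative f' z) (at z)"
    using smooth_on_second_derivatives[OF assms(3)] by metis
  obtain g' G where g': "\<And>w. w \<in> \<Omega> \<Longrightarrow> (inv_into D f has_derivative g' w) (at w)"
    and G: "\<And>v w. w \<in> \<Omega> \<Longrightarrow> ((\<lambda>y. g' y v) has_derivative G v w) (at w)"
      "\<And>v u. continuous_on \<Omega> (\<lambda>w. G v w u)" "\<And>v. continuous_on \<Omega> (\<lambda>w. g' w v)"
    using smooth_on_second_derivatives[OF assms(4)] by metis
  have "f' (inv_into D f w) (g' w h) = h" if "w \<in> \<Omega>" for w h
  proof (rule derivative_right_inverse[OF \<open>open \<Omega>\<close> that _ g'[OF that] f'])
    show "f (inv_into D f x) = x" if "x \<in> \<Omega>" for x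
      using bij that by (simp add: bij_betw_inv_into_right)
    show "inv_into D f w \<in> D"
      using bij that by (metis bij_betw_imp_surj_on inv_into_into)
  qed
  with f' g' G show thesis
    by (rule that)
qed

definition jacobian_det :: "(complex \<Rightarrow> complex) \<Rightarrow> real" where
  "jacobian_det M = Re (M 1) * Im (M \<i>) - Im (M 1) * Re (M \<i>)"

lemma linear_complex_coordinates:
  assumes "linear (L :: complex \<Rightarrow> 'b::real_vector)"
  shows "L x = Re x *\<^sub>R L 1 + Im x *\<^sub>R L \<i>"
proof -
  have "x = Re x *\<^sub>R 1 + Im x *\<^sub>R \<i>"
    by (simp add: complex_eq_iff)
  then have "L x = L (Re x *\<^sub>R 1 + Im x *\<^sub>R \<i>)"
    by simp
  also have "\<dots> = Re x *\<^sub>R L 1 + Im x *\<^sub>R L \<i>"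
    using assms by (simp add: linear_add linear_scale)
  finally show ?thesis .
qed

lemma real_2x2_inverse:
  fixes x y u v p q r s :: real
  assumes "x * p + y * r = 1" "x * q + y * s = 0" "u * p + v * r = 0" "u * q + v * s = 1"
  shows "(x * v - y * u) * (p * s - r * q) = 1"
    and "x = (x * v - y * u) * s" "y = - (x * v - y * u) * q"
    and "u = - (x * v - y * u) * r" "v = (x * v - y * u) * p"
  using assms by algebra+

lemma wirtinger_right_inverse:
  fixes L M :: "complex \<Rightarrow> complex"
  assumes "linear L" and LM: "\<And>h. L (M h) = h"
  defines "A \<equiv> (L 1 - \<i> * L \<i>) / 2" and "B \<equiv> (L 1 + \<i> * L \<i>) / 2"
  shows "jacobian_det M * ((cmod A)\<^sup>2 - (cmod B)\<^sup>2) = 1"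
    and "M 1 = of_real (jacobian_det M) * (cnj A - B)"
    and "M \<i> = \<i> * of_real (jacobian_det M) * (cnj A + B)"
proof -
  have L: "Re (M h) *\<^sub>R L 1 + Im (M h) *\<^sub>R L \<i> = h" for h
    using linear_complex_coordinates[OF assms(1), of "M h"] LM by simp
  have "Re (M 1) * Re (L 1) + Im (M 1) * Re (L \<i>) = 1" "Re (M 1) * Im (L 1) + Im (M 1) * Im (L \<i>) = 0"
    "Re (M \<i>) * Re (L 1) + Im (M \<i>) * Re (L \<i>) = 0" "Re (M \<i>) * Im (L 1) + Im (M \<i>) * Im (L \<i>) = 1"
    using L[of 1] L[of \<i>] by (simp_all add: complex_eq_iff)
  note inv = real_2x2_inverse[OF this, folded jacobian_det_def]
  define d where "d = jacobian_det M"
  note inv = inv[folded d_def]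
  have "(cmod A)\<^sup>2 - (cmod B)\<^sup>2 = Re (L 1) * Im (L \<i>) - Re (L \<i>) * Im (L 1)"
    unfolding A_def B_def cmod_power2 by (simp add: power2_eq_square field_simps)
  with inv(1) show "jacobian_det M * ((cmod A)\<^sup>2 - (cmod B)\<^sup>2) = 1"
    by (simp add: d_def)
  show "M 1 = of_real (jacobian_det M) * (cnj A - B)" "M \<i> = \<i> * of_real (jacobian_det M) * (cnj A + B)"
    unfolding d_def[symmetric] A_def B_def using inv(2-5) by (simp_all add: complex_eq_iff field_simps)
qed

lemma connected_nonvanishing_sgn_eq:
  fixes \<phi> :: "'a::topological_space \<Rightarrow> real"
  assumes "connected S" "continuous_on S \<phi>" "\<And>x. x \<in> S \<Longrightarrow> \<phi> x \<noteq> 0" "x \<in> S" "y \<in> S"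
  shows "sgn (\<phi> x) = sgn (\<phi> y)"
proof -
  have "(\<lambda>x. sgn (\<phi> x)) ` S \<subseteq> {-1, 1}"
    using assms(3) by (auto simp: sgn_if)
  then have "(\<lambda>x. sgn (\<phi> x)) constant_on S"
    using assms(1-3) by (intro continuous_finite_range_constant continuous_on_sgn) (auto intro: finite_subset)
  then show ?thesis
    using assms(4,5) by (auto simp: constant_on_def)
qed

lemma jacobian_det_sgn_eq:
  fixes L M :: "complex \<Rightarrow> complex \<Rightarrow> complex"
  assumes "connected S" and M: "\<And>v. continuous_on S (\<lambda>w. M w v)"
    and L: "\<And>w. w \<in> S \<Longrightarrow> linear (L w)" "\<And>w h. w \<in> S \<Longrightarrow> L w (M w h) = h"
    and "w \<in> S" "w0 \<in> S"
  shows "sgn (jacobian_det (M w)) = sgn (jacobian_det (M w0))"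
proof (rule connected_nonvanishing_sgn_eq[OF \<open>connected S\<close> _ _ \<open>w \<in> S\<close> \<open>w0 \<in> S\<close>])
  show "continuous_on S (\<lambda>w. jacobian_det (M w))"
    unfolding jacobian_det_def by (intro continuous_intros M)
  show "jacobian_det (M x) \<noteq> 0" if "x \<in> S" for x
    using wirtinger_right_inverse(1)[OF L[OF that]] by auto
qed

lemma sqrt_one_plus_sum_squared:
  fixes a b p :: real
  assumes a: "a > 0" and b: "b \<ge> 0" and p: "p > 0"
    and rel: "(a\<^sup>2 - b\<^sup>2)\<^sup>2 = 4 * a * b * p\<^sup>2"
  shows "a \<noteq> b" and "sqrt (1 + (a + b)\<^sup>2 / p\<^sup>2) = (a + b) / \<bar>a - b\<bar>"
proof -
  have key: "(a - b)\<^sup>2 * (a + b)\<^sup>2 = 4 * a * b * p\<^sup>2"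
    using rel by (simp add: power2_eq_square algebra_simps)
  with a p show "a \<noteq> b"
    by auto
  have "(p\<^sup>2 + (a + b)\<^sup>2) * (a - b)\<^sup>2 = (a + b)\<^sup>2 * p\<^sup>2"
    using key by algebra
  moreover have "1 + (a + b)\<^sup>2 / p\<^sup>2 = (p\<^sup>2 + (a + b)\<^sup>2) / p\<^sup>2"
    using p by (simp add: field_simps)
  ultimately have "1 + (a + b)\<^sup>2 / p\<^sup>2 = ((a + b) / (a - b))\<^sup>2"
    using p \<open>a \<noteq> b\<close> by (simp add: power_divide frac_eq_eq)
  then show "sqrt (1 + (a + b)\<^sup>2 / p\<^sup>2) = (a + b) / \<bar>a - b\<bar>"
    using a b by (simp add: real_sqrt_abs abs_divide)
qed

lemma normalised_parallel_sum:
  fixes P Q :: complex and p :: real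
  assumes P: "P \<noteq> 0" and p: "p > 0" and PQ: "P * Q = of_real (cmod P * cmod Q)"
    and rel: "((cmod P)\<^sup>2 - (cmod Q)\<^sup>2)\<^sup>2 = 4 * cmod P * cmod Q * p\<^sup>2"
  shows "(Q + cnj P) / of_real (sqrt (1 + (cmod (Q + cnj P))\<^sup>2 / p\<^sup>2))
           = of_real (sgn (cmod P - cmod Q)) * (cnj P - Q)"
proof -
  define a b where "a = cmod P" and "b = cmod Q"
  have a: "a > 0" and b: "b \<ge> 0"
    using P by (simp_all add: a_def b_def)
  note root = sqrt_one_plus_sum_squared[OF a b p rel[folded a_def b_def]]
  have "of_real (a\<^sup>2) * Q = of_real (a * b) * cnj P"
    using PQ by (metis a_def b_def complex_norm_square mult.assoc mult.commute)
  then have Q: "Q = of_real (b / a) * cnj P"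
    using a by (simp add: field_simps power2_eq_square)
  have sum: "Q + cnj P = of_real ((a + b) / a) * cnj P"
    using a by (simp add: Q field_simps)
  have "cmod (Q + cnj P) = \<bar>(a + b) / a\<bar> * a"
    unfolding sum a_def by (simp only: norm_mult norm_of_real complex_mod_cnj)
  then have norm_sum: "cmod (Q + cnj P) = a + b"
    using a b by simp
  have scale: "of_real x * y / of_real z = of_real (x / z) * y" for x z and y :: complex
    by simp
  have "(Q + cnj P) / of_real (sqrt (1 + (cmod (Q + cnj P))\<^sup>2 / p\<^sup>2))
      = of_real ((a + b) / a / ((a + b) / \<bar>a - b\<bar>)) * cnj P"
    unfolding norm_sum root(2) by (subst sum) (rule scale)
  also have "(a + b) / a / ((a + b) / \<bar>a - b\<bar>) = \<bar>a - b\<bar> / a"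
    using a b by simp
  also have "\<dots> = sgn (a - b) * (1 - b / a)"
    using a by (simp add: field_simps abs_sgn)
  also have "of_real (sgn (a - b) * (1 - b / a)) * cnj P = of_real (sgn (a - b)) * (cnj P - Q)"
    unfolding Q by (simp add: algebra_simps)
  finally show ?thesis
    by (simp only: a_def b_def)
qed

text \<open>In the application \<open>A\<close>, \<open>B\<close> are the Wirtinger derivatives of \<open>f\<close> at \<open>z = g w\<close>, \<open>d\<close> is the
  Jacobian of \<open>g\<close> at \<open>w\<close>, and \<open>P\<close>, \<open>Q\<close> are the Wirtinger derivatives of \<open>\<beta> * log g\<close> at \<open>w\<close>.\<close>

lemma log_inverse_wirtinger_product:
  fixes A B z \<beta> :: complex and p c d :: real
  assumes p: "p > 0" and z: "z \<noteq> 0"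
    and eq: "of_real (p\<^sup>2) * A * cnj B = of_real c / z\<^sup>2"
    and \<beta>: "\<beta>\<^sup>2 = of_real (-4 * c)"
  defines "P \<equiv> \<beta> / z * of_real d * cnj A" and "Q \<equiv> - \<beta> / z * of_real d * B"
  shows "P * Q = of_real (4 * c\<^sup>2 * d\<^sup>2 / (p\<^sup>2 * (cmod z) ^ 4))"
proof -
  have "of_real (p\<^sup>2) * (cnj A * B) = of_real c / (cnj z)\<^sup>2"
    using arg_cong[OF eq, of cnj] by (simp add: mult.assoc)
  then have AB: "cnj A * B = of_real c / (of_real (p\<^sup>2) * (cnj z)\<^sup>2)"
    using p z by (simp add: field_simps)
  have zz: "(z * cnj z)\<^sup>2 = of_real ((cmod z) ^ 4)"
    by (simp add: complex_norm_square[symmetric] power_mult)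
  have "P * Q = - (\<beta> / z)\<^sup>2 * of_real (d\<^sup>2) * (cnj A * B)"
    by (simp add: P_def Q_def power2_eq_square algebra_simps)
  also have "\<dots> = of_real (4 * c\<^sup>2 * d\<^sup>2) / (of_real (p\<^sup>2) * (z * cnj z)\<^sup>2)"
    unfolding power_divide \<beta> AB using p z by (simp add: field_simps power2_eq_square)
  finally show ?thesis
    unfolding zz by simp
qed

lemma log_inverse_wirtinger_identities:
  fixes A B z \<beta> :: complex and p c d :: real
  assumes p: "p > 0" and z: "z \<noteq> 0" and c: "c \<noteq> 0"
    and dJ: "d * ((cmod A)\<^sup>2 - (cmod B)\<^sup>2) = 1"
    and eq: "of_real (p\<^sup>2) * A * cnj B = of_real c / z\<^sup>2"
    and \<beta>: "\<beta>\<^sup>2 = of_real (-4 * c)"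
  defines "P \<equiv> \<beta> / z * of_real d * cnj A" and "Q \<equiv> - \<beta> / z * of_real d * B"
  shows "P \<noteq> 0" and "P * Q = of_real (cmod P * cmod Q)"
    and "((cmod P)\<^sup>2 - (cmod Q)\<^sup>2)\<^sup>2 = 4 * cmod P * cmod Q * p\<^sup>2"
    and "sgn (cmod P - cmod Q) = sgn d"
proof -
  define r where "r = 4 * c\<^sup>2 * d\<^sup>2 / (p\<^sup>2 * (cmod z) ^ 4)"
  have PQ: "P * Q = of_real r"
    unfolding r_def P_def Q_def by (rule log_inverse_wirtinger_product[OF p z eq \<beta>])
  have "r \<ge> 0"
    by (simp add: r_def)
  then have PQ_norm: "cmod P * cmod Q = r"
    using arg_cong[OF PQ, of cmod] by (simp only: norm_mult norm_of_real abs_of_nonneg)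
  then show "P * Q = of_real (cmod P * cmod Q)"
    by (simp add: PQ)
  have "d \<noteq> 0" "A \<noteq> 0" "\<beta> / z \<noteq> 0"
    using dJ eq c z \<beta> by auto
  then show "P \<noteq> 0"
    by (simp add: P_def)
  have norm_e: "(cmod (\<beta> / z))\<^sup>2 = 4 * \<bar>c\<bar> / (cmod z)\<^sup>2"
    using arg_cong[OF \<beta>, of cmod] by (simp add: norm_power norm_divide norm_mult power_divide)
  have diff: "(cmod P)\<^sup>2 - (cmod Q)\<^sup>2 = (cmod (\<beta> / z))\<^sup>2 * d"
  proof -
    have "(cmod P)\<^sup>2 - (cmod Q)\<^sup>2 = (cmod (\<beta> / z))\<^sup>2 * d * (d * ((cmod A)\<^sup>2 - (cmod B)\<^sup>2))"
      unfolding P_def Q_def norm_mult norm_minus_cancel norm_of_real complex_mod_cnj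
      by (simp add: power_mult_distrib algebra_simps power2_eq_square)
    with dJ show ?thesis by simp
  qed
  show "((cmod P)\<^sup>2 - (cmod Q)\<^sup>2)\<^sup>2 = 4 * cmod P * cmod Q * p\<^sup>2"
    using p z unfolding diff power_mult_distrib norm_e mult.assoc[of 4] PQ_norm r_def
    by (simp add: field_simps power2_eq_square power4_eq_xxxx)
  have "cmod P + cmod Q > 0"
    using \<open>P \<noteq> 0\<close> by (simp add: add_pos_nonneg)
  then have "sgn (cmod P - cmod Q) = sgn ((cmod P - cmod Q) * (cmod P + cmod Q))"
    by (simp add: sgn_mult)
  also have "\<dots> = sgn ((cmod (\<beta> / z))\<^sup>2 * d)"
    using diff by (simp add: power2_eq_square algebra_simps)
  also have "\<dots> = sgn d"
    using \<open>\<beta> / z \<noteq> 0\<close> by (simp add: sgn_mult)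
  finally show "sgn (cmod P - cmod Q) = sgn d" .
qed

text \<open>With \<open>F = \<beta> * log g\<close> for the inverse \<open>g\<close> of \<open>f\<close>, \<open>M\<close> plays the role of the derivative of \<open>g\<close>
  at \<open>w = f z\<close>, \<open>\<omega>\<close> is \<open>Re F\<close> up to a constant, and the right-hand side is the rotated
  gradient of \<open>Im F\<close>.\<close>

lemma normalised_grad_eq_rotated_grad:
  fixes f L M :: "complex \<Rightarrow> complex" and \<omega> :: "complex \<Rightarrow> real" and z w \<beta> :: complex and p c :: real
  assumes f: "(f has_derivative L) (at z)" and LM: "\<And>h. L (M h) = h"
    and p: "p > 0" and z: "z \<noteq> 0" and c: "c \<noteq> 0"
    and eq: "of_real (p\<^sup>2) * wirt_z f z * cnj (wirt_zbar f z) = of_real c / z\<^sup>2"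
    and \<beta>: "\<beta>\<^sup>2 = of_real (-4 * c)"
    and \<omega>: "(\<omega> has_derivative (\<lambda>h. Re (\<beta> * M h / z))) (at w)"
  shows "grad \<omega> w / of_real (sqrt (1 + (cmod (grad \<omega> w))\<^sup>2 / p\<^sup>2))
           = of_real (sgn (jacobian_det M)) * (of_real (Im (\<beta> * M \<i> / z)) - \<i> * of_real (Im (\<beta> * M 1 / z)))"
proof -
  define A B where "A = wirt_z f z" and "B = wirt_zbar f z"
  have AB: "A = (L 1 - \<i> * L \<i>) / 2" "B = (L 1 + \<i> * L \<i>) / 2"
    unfolding A_def B_def wirt_z_def wirt_zbar_def frechet_derivative_at[OF f, symmetric] by simp_all
  define d where "d = jacobian_det M"
  note inv = wirtinger_right_inverse[OF has_derivative_linear[OF f] LM, folded AB d_def]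
  define P Q where "P = \<beta> / z * of_real d * cnj A" and "Q = - \<beta> / z * of_real d * B"
  note PQ = log_inverse_wirtinger_identities[OF p z c inv(1) eq[folded A_def B_def] \<beta>, folded P_def Q_def]
  have eM: "\<beta> * M 1 / z = P + Q" "\<beta> * M \<i> / z = \<i> * (P - Q)"
    unfolding P_def Q_def inv(2,3) by (simp_all add: algebra_simps add_divide_distrib diff_divide_distrib)
  have "grad \<omega> w = of_real (Re (\<beta> * M 1 / z)) + \<i> * of_real (Re (\<beta> * M \<i> / z))"
    unfolding grad_def frechet_derivative_at[OF \<omega>, symmetric] by simp
  also have "\<dots> = Q + cnj P"
    unfolding eM by (simp add: complex_eq_iff)
  finally have "grad \<omega> w = Q + cnj P" .
  moreover have "of_real (Im (\<beta> * M \<i> / z)) - \<i> * of_real (Im (\<beta> * M 1 / z)) = cnj P - Q"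
    unfolding eM by (simp add: complex_eq_iff)
  ultimately show ?thesis
    using normalised_parallel_sum[OF PQ(1) p PQ(2,3)] PQ(4) by (simp add: d_def)
qed

lemma angle_diff_eq_Im_Ln_mod_2pi:
  assumes "z \<noteq> 0" "z0 \<noteq> 0" "cis t = sgn z" "cis t0 = sgn z0"
  obtains n :: int where "t - t0 - Im (Ln (z / z0)) = of_int (2 * n) * pi"
proof -
  have "cis (t - t0 - Im (Ln (z / z0))) = cis t / cis t0 / cis (Arg (z / z0))"
    using assms(1,2) by (simp add: cis_divide Arg_eq_Im_Ln)
  also have "\<dots> = 1"
    using assms by (simp add: cis_Arg sgn_divide sgn_eq_0_iff)
  finally show thesis
    using that by (auto simp: cis_conv_exp exp_eq_1)
qed

lemma continuous_arg_eq_Im_Ln: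
  fixes \<theta> :: "complex \<Rightarrow> real"
  assumes "open D" "0 \<notin> D" "z0 \<in> D" and cont: "continuous_on D \<theta>"
    and polar: "\<And>z. z \<in> D \<Longrightarrow> z = of_real (cmod z) * exp (\<i> * of_real (\<theta> z))"
  obtains r where "r > 0" "\<And>z. z \<in> D \<Longrightarrow> cmod (z - z0) < r \<Longrightarrow> \<theta> z = \<theta> z0 + Im (Ln (z / z0))"
proof -
  have nz: "z \<noteq> 0" if "z \<in> D" for z
    using that assms(2) by auto
  have cis_\<theta>: "cis (\<theta> z) = sgn z" if "z \<in> D" for z
  proof -
    have "z = of_real (cmod z) * cis (\<theta> z)"
      using polar[OF that] by (simp add: cis_conv_exp)
    then show ?thesis
      using nz[OF that] by (simp add: sgn_eq field_simps)
  qed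
  define \<sigma> where "\<sigma> z = \<theta> z - \<theta> z0 - Im (Ln (z / z0))" for z
  have "isCont \<sigma> z0" "\<sigma> z0 = 0"
    using cont assms(1,3) nz[OF assms(3)] unfolding \<sigma>_def
    by (auto intro!: continuous_intros simp: continuous_on_eq_continuous_at)
  then obtain r where "r > 0" and r: "\<And>z. dist z z0 < r \<Longrightarrow> \<bar>\<sigma> z\<bar> < 2 * pi"
    unfolding continuous_at_eps_delta dist_real_def by (metis diff_zero pi_gt_zero mult_pos_pos zero_less_numeral)
  have "\<sigma> z = 0" if zD: "z \<in> D" and near: "cmod (z - z0) < r" for z
  proof -
    obtain n :: int where n: "\<sigma> z = of_int (2 * n) * pi"
      using angle_diff_eq_Im_Ln_mod_2pi[OF nz[OF zD] nz[OF assms(3)] cis_\<theta>[OF zD] cis_\<theta>[OF assms(3)]]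
      unfolding \<sigma>_def by blast
    have "\<bar>of_int n\<bar> * (2 * pi) < 1 * (2 * pi)"
      using r[of z] near n by (simp add: dist_norm abs_mult)
    then have "\<bar>of_int n :: real\<bar> < 1"
      by (simp only: mult_less_cancel_right) simp
    then show ?thesis
      using n by simp
  qed
  with \<open>r > 0\<close> show thesis
    by (intro that[of r]) (auto simp: \<sigma>_def algebra_simps)
qed

lemma log_potential_local_form:
  fixes \<theta> :: "complex \<Rightarrow> real" and c :: real
  assumes D: "open D" "0 \<notin> D" "z0 \<in> D" and c: "c \<noteq> 0"
    and arg: "c > 0 \<Longrightarrow> continuous_on D \<theta> \<and> (\<forall>z\<in>D. z = of_real (cmod z) * exp (\<i> * of_real (\<theta> z)))"
  defines "\<beta> \<equiv> if c < 0 then - of_real (2 * sqrt (- c)) else - \<i> * of_real (2 * sqrt c)"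
  shows "\<exists>r k. r > 0 \<and> (\<forall>z\<in>D. cmod (z - z0) < r \<longrightarrow>
           (if c < 0 then 2 * sqrt (- c) * ln (1 / cmod z) else 2 * sqrt c * \<theta> z) = Re (\<beta> * Ln (z / z0)) + k)"
proof (cases "c < 0")
  case True
  have "2 * sqrt (- c) * ln (1 / cmod z) = Re (\<beta> * Ln (z / z0)) + 2 * sqrt (- c) * ln (1 / cmod z0)"
    if "z \<in> D" for z
  proof -
    have "z \<noteq> 0" "z0 \<noteq> 0"
      using that D by auto
    then show ?thesis
      using True by (simp add: \<beta>_def Re_Ln norm_divide ln_div algebra_simps)
  qed
  with True show ?thesis
    by (intro exI[of _ 1] exI[of _ "2 * sqrt (- c) * ln (1 / cmod z0)"]) auto
next
  case False
  with c arg have cont: "continuous_on D \<theta>"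
    and polar: "\<And>z. z \<in> D \<Longrightarrow> z = of_real (cmod z) * exp (\<i> * of_real (\<theta> z))"
    by auto
  obtain r where "r > 0"
    and arg_local: "\<And>z. z \<in> D \<Longrightarrow> cmod (z - z0) < r \<Longrightarrow> \<theta> z = \<theta> z0 + Im (Ln (z / z0))"
    using continuous_arg_eq_Im_Ln[OF D cont polar] by blast
  have "2 * sqrt c * \<theta> z = Re (\<beta> * Ln (z / z0)) + 2 * sqrt c * \<theta> z0" if "z \<in> D" "cmod (z - z0) < r" for z
    using False arg_local[OF that] by (simp add: \<beta>_def algebra_simps)
  with False \<open>r > 0\<close> show ?thesis
    by (intro exI[of _ r] exI[of _ "2 * sqrt c * \<theta> z0"]) auto
qed

lemma log_potential_has_derivative:
  fixes \<theta> :: "complex \<Rightarrow> real" and c :: real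
  assumes D: "open D" "0 \<notin> D" and c: "c \<noteq> 0"
    and arg: "c > 0 \<Longrightarrow> continuous_on D \<theta> \<and> (\<forall>z\<in>D. z = of_real (cmod z) * exp (\<i> * of_real (\<theta> z)))"
  obtains \<beta> where "\<beta>\<^sup>2 = of_real (-4 * c)"
    and "\<And>z. z \<in> D \<Longrightarrow> ((\<lambda>z. if c < 0 then 2 * sqrt (- c) * ln (1 / cmod z) else 2 * sqrt c * \<theta> z)
                              has_derivative (\<lambda>h. Re (\<beta> * h / z))) (at z)"
proof
  define \<beta> where "\<beta> = (if c < 0 then - of_real (2 * sqrt (- c)) else - \<i> * of_real (2 * sqrt c))"
  show "\<beta>\<^sup>2 = of_real (-4 * c)"
    using c by (cases "c < 0") (simp_all add: \<beta>_def power_mult_distrib flip: of_real_power)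
  fix z0 assume "z0 \<in> D"
  then have "z0 \<noteq> 0"
    using D(2) by auto
  obtain r k where "r > 0" and local: "\<And>z. z \<in> D \<Longrightarrow> cmod (z - z0) < r \<Longrightarrow>
      (if c < 0 then 2 * sqrt (- c) * ln (1 / cmod z) else 2 * sqrt c * \<theta> z) = Re (\<beta> * Ln (z / z0)) + k"
    using log_potential_local_form[OF D \<open>z0 \<in> D\<close> c arg, folded \<beta>_def] by blast
  have "((\<lambda>z. Ln (z / z0)) has_field_derivative inverse (z0 / z0) * (1 / z0)) (at z0)"
    using \<open>z0 \<noteq> 0\<close> by (intro DERIV_chain2[OF has_field_derivative_Ln] derivative_eq_intros) auto
  then have "((\<lambda>z. Ln (z / z0)) has_derivative (*) (1 / z0)) (at z0)"
    using \<open>z0 \<noteq> 0\<close> by (simp add: has_field_derivative_def)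
  then have "((\<lambda>z. Re (\<beta> * Ln (z / z0)) + k) has_derivative (\<lambda>h. Re (\<beta> * (1 / z0 * h)))) (at z0)"
    by (intro has_derivative_add_const has_derivative_Re has_derivative_mult_right)
  then have "((\<lambda>z. Re (\<beta> * Ln (z / z0)) + k) has_derivative (\<lambda>h. Re (\<beta> * h / z0))) (at z0)"
    by (simp add: field_simps)
  then show "((\<lambda>z. if c < 0 then 2 * sqrt (- c) * ln (1 / cmod z) else 2 * sqrt c * \<theta> z)
               has_derivative (\<lambda>h. Re (\<beta> * h / z0))) (at z0)"
    by (rule has_derivative_transform_within_open[where s = "D \<inter> ball z0 r"])
      (use D(1) \<open>r > 0\<close> \<open>z0 \<in> D\<close> local in \<open>auto simp: dist_norm norm_minus_commute\<close>)
qed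

lemma divergence_transform_within_open:
  assumes H: "(H has_derivative H') (at w)" and "open N" "w \<in> N" "\<And>x. x \<in> N \<Longrightarrow> V x = H x"
  shows "V differentiable (at w)" "divergence V w = divergence H w"
proof -
  have V: "(V has_derivative H') (at w)"
    by (rule has_derivative_transform_within_open[OF H assms(2,3)]) (simp add: assms(4))
  then show "V differentiable (at w)"
    by (auto simp: differentiable_def)
  show "divergence V w = divergence H w"
    unfolding divergence_def frechet_derivative_at[OF H, symmetric] frechet_derivative_at[OF V, symmetric] ..
qed

text \<open>The quotient \<open>\<beta> * g' x v / g x\<close> is the derivative of \<open>\<beta> * log g\<close> in direction \<open>v\<close>, so \<open>V\<close> is
  a multiple of the rotated gradient of \<open>Im (\<beta> * log g)\<close>; its divergence is a difference of
  mixed partial derivatives of \<open>g\<close>.\<close>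

lemma rotated_log_gradient_divergence_free:
  fixes g V :: "complex \<Rightarrow> complex" and \<beta> :: complex and s :: real
  assumes S: "open S" "w \<in> S" and nz: "g w \<noteq> 0"
    and g: "\<And>x. x \<in> S \<Longrightarrow> (g has_derivative g' x) (at x)"
    and g': "\<And>v x. x \<in> S \<Longrightarrow> ((\<lambda>y. g' y v) has_derivative G v x) (at x)"
    and G: "\<And>v u. continuous_on S (\<lambda>x. G v x u)"
    and V: "\<And>x. x \<in> S \<Longrightarrow> V x = of_real s * (of_real (Im (\<beta> * g' x \<i> / g x)) - \<i> * of_real (Im (\<beta> * g' x 1 / g x)))"
  shows "V differentiable (at w) \<and> divergence V w = 0"
proof -
  define H where "H x = of_real s * (of_real (Im (\<beta> * g' x \<i> / g x)) - \<i> * of_real (Im (\<beta> * g' x 1 / g x)))" for x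
  define Q where "Q v h = (\<beta> * G v w h * g w - \<beta> * g' w v * g' w h) / (g w * g w)" for v h
  have "((\<lambda>x. \<beta> * g' x v / g x) has_derivative Q v) (at w)" for v
    unfolding Q_def using S by (intro has_derivative_divide' has_derivative_mult_right g' g nz)
  then have H': "(H has_derivative (\<lambda>h. of_real s * (of_real (Im (Q \<i> h)) - \<i> * of_real (Im (Q 1 h))))) (at w)"
    unfolding H_def[abs_def] by (intro derivative_intros)
  have "G 1 w \<i> = G \<i> w 1"
    using S G by (intro mixed_partials_symmetric_complex[OF S g g' g'])
      (auto simp: continuous_on_eq_continuous_at)
  then have "Q \<i> 1 = Q 1 \<i>"
    by (simp add: Q_def mult.commute)
  then have "divergence H w = 0"
    unfolding divergence_def frechet_derivative_at[OF H', symmetric] by simp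
  moreover have "V x = H x" if "x \<in> S" for x
    using V[OF that] by (simp only: H_def)
  ultimately show ?thesis
    using divergence_transform_within_open[OF H' S(1,2)] by metis
qed

theorem proposition3p4:
  fixes D \<Omega> :: "complex set" and f :: "complex \<Rightarrow> complex" and p :: "complex \<Rightarrow> real"
    and c :: real and \<theta> :: "complex \<Rightarrow> real" and \<omega> :: "complex \<Rightarrow> real"
  assumes D: "open D" "connected D" "0 \<notin> D"
    and \<Omega>: "open \<Omega>" "connected \<Omega>"
    and p: "smooth_on \<Omega> p" "\<forall>w\<in>\<Omega>. p w > 0"
    and diffeo: "bij_betw f D \<Omega>" "smooth_on D f" "smooth_on \<Omega> (inv_into D f)"
    and eq: "\<forall>z\<in>D. complex_of_real ((p (f z))\<^sup>2) * wirt_z f z * cnj (wirt_zbar f z)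
                   = complex_of_real c / z\<^sup>2"
    and c: "c \<noteq> 0"
    and arg_branch: "c > 0 \<Longrightarrow> continuous_on D \<theta> \<and>
                       (\<forall>z\<in>D. z = complex_of_real (cmod z) * exp (\<i> * complex_of_real (\<theta> z)))"
    and \<omega>_def: "\<omega> = (\<lambda>w. if c < 0 then 2 * sqrt (- c) * ln (1 / cmod (inv_into D f w))
                         else 2 * sqrt c * \<theta> (inv_into D f w))"
  shows "\<forall>w\<in>\<Omega>. (\<lambda>x. grad \<omega> x / complex_of_real (sqrt (1 + (cmod (grad \<omega> x))\<^sup>2 / (p x)\<^sup>2)))
                    differentiable (at w)
            \<and> divergence (\<lambda>x. grad \<omega> x / complex_of_real (sqrt (1 + (cmod (grad \<omega> x))\<^sup>2 / (p x)\<^sup>2))) w = 0"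
proof -
  define g where "g = inv_into D f"
  define V where "V = (\<lambda>x. grad \<omega> x / complex_of_real (sqrt (1 + (cmod (grad \<omega> x))\<^sup>2 / (p x)\<^sup>2)))"
  obtain f' g' G where f': "\<And>z. z \<in> D \<Longrightarrow> (f has_derivative f' z) (at z)"
    and g': "\<And>w. w \<in> \<Omega> \<Longrightarrow> (g has_derivative g' w) (at w)"
    and G: "\<And>v w. w \<in> \<Omega> \<Longrightarrow> ((\<lambda>y. g' y v) has_derivative G v w) (at w)"
      "\<And>v u. continuous_on \<Omega> (\<lambda>w. G v w u)" "\<And>v. continuous_on \<Omega> (\<lambda>w. g' w v)"
    and right_inverse: "\<And>w h. w \<in> \<Omega> \<Longrightarrow> f' (g w) (g' w h) = h"
    by (rule smooth_inverse_derivatives[OF diffeo(1) \<Omega>(1) diffeo(2,3), folded g_def]) (rule that)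
  have gD: "g w \<in> D" "g w \<noteq> 0" and fg: "f (g w) = w" if "w \<in> \<Omega>" for w
    using that diffeo(1) D(3) by (auto simp: g_def bij_betw_inv_into_right bij_betw_imp_surj_on inv_into_into)
      (metis bij_betw_imp_surj_on inv_into_into)
  obtain \<beta> where \<beta>: "\<beta>\<^sup>2 = of_real (-4 * c)"
    and \<Phi>: "\<And>z. z \<in> D \<Longrightarrow> ((\<lambda>z. if c < 0 then 2 * sqrt (- c) * ln (1 / cmod z) else 2 * sqrt c * \<theta> z)
                              has_derivative (\<lambda>h. Re (\<beta> * h / z))) (at z)"
    using log_potential_has_derivative[OF D(1,3) c arg_branch] by blast
  have \<omega>: "(\<omega> has_derivative (\<lambda>h. Re (\<beta> * g' w h / g w))) (at w)" if "w \<in> \<Omega>" for w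
    using diff_chain_at[OF g'[OF that] \<Phi>[OF gD(1)[OF that]]] by (simp add: \<omega>_def g_def o_def)
  have pointwise: "V w = of_real (sgn (jacobian_det (g' w0)))
              * (of_real (Im (\<beta> * g' w \<i> / g w)) - \<i> * of_real (Im (\<beta> * g' w 1 / g w)))"
    if w: "w \<in> \<Omega>" and w0: "w0 \<in> \<Omega>" for w w0
  proof -
    have sgn: "sgn (jacobian_det (g' w)) = sgn (jacobian_det (g' w0))"
      using jacobian_det_sgn_eq[OF \<Omega>(2) G(3) has_derivative_linear[OF f'[OF gD(1)]] right_inverse w w0] .
    have "of_real ((p w)\<^sup>2) * wirt_z f (g w) * cnj (wirt_zbar f (g w)) = of_real c / (g w)\<^sup>2"
      using bspec[OF eq gD(1)[OF w]] unfolding fg[OF w] .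
    from normalised_grad_eq_rotated_grad[OF f'[OF gD(1)[OF w]] right_inverse[OF w] bspec[OF p(2) w] gD(2)[OF w] c this \<beta> \<omega>[OF w]]
    show ?thesis
      unfolding V_def sgn .
  qed
  have "V differentiable (at w0) \<and> divergence V w0 = 0" if "w0 \<in> \<Omega>" for w0
    by (rule rotated_log_gradient_divergence_free[OF \<Omega>(1) that gD(2)[OF that] g' G(1,2) pointwise[OF _ that]])
  then show ?thesis
    unfolding V_def by blast
qed

end
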